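(* Over profiles whose ballots are strict weak orders (ties allowed), let $f$ be a VCCR satisfying Downward Homogeneity, Coherent Defeat, and Positive Involvement in Defeat. Then $f(\mathbf P)\supseteq sc(\mathbf P)$ for every profile $\mathbf P$.
   Context: Profiles: $\mathbf P:V\to\mathcal W(X)$, $V$ nonempty finite set of voters, $X=X(\mathbf P)$ nonempty finite set of candidates (from fixed infinite sets), $\mathcal W(X)$ the strict weak orders on $X$ (ties allowed). "Ranks $x$ above $y$" means strictly. $\mathrm{Margin}_{\mathbf P}(x,y)$ = #voters with $x$ strictly above $y$ minus #voters with $y$ strictly above $x$. Majority path from $x_1$ to $x_n$: $(x_1,\dots,x_n)$ with all $\mathrm{Margin}_{\mathbf P}(x_i,x_{i+1})>0$; strength = minimum of these. VCCR: $f(\mathbf P)$ asymmetric relation on $X(\mathbf P)$. $(x,y)\in sc(\mathbf P)$ iff $\mathrm{Margin}_{\mathbf P}(x,y)>0$ exceeds the strength of every majority path from $y$ to $x$. Downward Homogeneity: $f(\mathbf P)\supseteq f(2\mathbf P)$ where $2\mathbf P$ replaces each voter by two copies. Coherent Defeat: $\mathrm{Margin}_{\mathbf P}(x,y)>0$ and no majority path from $y$ to $x$ imply $(x,y)\in f(\mathbf P)$. Positive Involvement in Defeat: if $(x,y)\notin f(\mathbf P)$ and $\mathbf P'$ adds one new voter whose ballot ranks $y$ strictly above $x$, then $(x,y)\notin f(\mathbf P')$. *)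

theory Defs
  imports Main
begin

text \<open>Ballots of non-voters are
  fixed to be empty so that a profile is determined by its data on its voter set.\<close>

record ('v, 'c) profile =
  voters :: "'v set"
  cands  :: "'c set"
  ballot :: "'v \<Rightarrow> ('c \<times> 'c) set"

definition strict_weak_order :: "'c set \<Rightarrow> ('c \<times> 'c) set \<Rightarrow> bool" where
  "strict_weak_order X R \<longleftrightarrow>
     R \<subseteq> X \<times> X \<and>
     (\<forall>x y. (x, y) \<in> R \<longrightarrow> (y, x) \<notin> R) \<and>
     (\<forall>x y z. (x, y) \<in> R \<longrightarrow> (y, z) \<in> R \<longrightarrow> (x, z) \<in> R) \<and>
     (\<forall>x\<in>X. \<forall>y\<in>X. \<forall>z\<in>X. (x, y) \<in> R \<longrightarrow> (x, z) \<in> R \<or> (z, y) \<in> R)"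

definition is_profile :: "('v, 'c) profile \<Rightarrow> bool" where
  "is_profile P \<longleftrightarrow>
     finite (voters P) \<and> voters P \<noteq> {} \<and>
     finite (cands P) \<and> cands P \<noteq> {} \<and>
     (\<forall>i\<in>voters P. strict_weak_order (cands P) (ballot P i)) \<and>
     (\<forall>i. i \<notin> voters P \<longrightarrow> ballot P i = {})"

definition margin :: "('v, 'c) profile \<Rightarrow> 'c \<Rightarrow> 'c \<Rightarrow> int" where
  "margin P x y =
     int (card {i \<in> voters P. (x, y) \<in> ballot P i}) - int (card {i \<in> voters P. (y, x) \<in> ballot P i})"

definition majority_path :: "('v, 'c) profile \<Rightarrow> 'c list \<Rightarrow> bool" where
  "majority_path P xs \<longleftrightarrow>
     length xs \<ge> 2 \<and> (\<forall>i. Suc i < length xs \<longrightarrow> margin P (xs ! i) (xs ! Suc i) > 0)"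

definition majority_path_from_to :: "('v, 'c) profile \<Rightarrow> 'c list \<Rightarrow> 'c \<Rightarrow> 'c \<Rightarrow> bool" where
  "majority_path_from_to P xs a b \<longleftrightarrow> majority_path P xs \<and> hd xs = a \<and> last xs = b"

definition strength :: "('v, 'c) profile \<Rightarrow> 'c list \<Rightarrow> int" where
  "strength P xs = Min {margin P (xs ! i) (xs ! Suc i) | i. Suc i < length xs}"

definition sc :: "('v, 'c) profile \<Rightarrow> ('c \<times> 'c) set" where
  "sc P = {(x, y). x \<in> cands P \<and> y \<in> cands P \<and> margin P x y > 0 \<and>
     (\<forall>xs. majority_path_from_to P xs y x \<longrightarrow> margin P x y > strength P xs)}"

definition vccr :: "(('v, 'c) profile \<Rightarrow> ('c \<times> 'c) set) \<Rightarrow> bool" where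
  "vccr f \<longleftrightarrow> (\<forall>P. is_profile P \<longrightarrow>
     f P \<subseteq> cands P \<times> cands P \<and> (\<forall>x y. (x, y) \<in> f P \<longrightarrow> (y, x) \<notin> f P))"

text \<open>\<open>Q\<close> is a copy of \<open>2P\<close>: each voter of \<open>P\<close> is replaced by exactly two voters with the same ballot.\<close>
definition doubling :: "('v, 'c) profile \<Rightarrow> ('v, 'c) profile \<Rightarrow> bool" where
  "doubling P Q \<longleftrightarrow> cands Q = cands P \<and>
     (\<exists>\<pi>. \<pi> ` voters Q = voters P \<and>
          (\<forall>i\<in>voters P. card {j \<in> voters Q. \<pi> j = i} = 2) \<and>
          (\<forall>j\<in>voters Q. ballot Q j = ballot P (\<pi> j)))"

definition downward_homogeneity :: "(('v, 'c) profile \<Rightarrow> ('c \<times> 'c) set) \<Rightarrow> bool" where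
  "downward_homogeneity f \<longleftrightarrow>
     (\<forall>P Q. is_profile P \<longrightarrow> is_profile Q \<longrightarrow> doubling P Q \<longrightarrow> f Q \<subseteq> f P)"

definition coherent_defeat :: "(('v, 'c) profile \<Rightarrow> ('c \<times> 'c) set) \<Rightarrow> bool" where
  "coherent_defeat f \<longleftrightarrow>
     (\<forall>P x y. is_profile P \<longrightarrow> margin P x y > 0 \<longrightarrow>
        \<not> (\<exists>xs. majority_path_from_to P xs y x) \<longrightarrow> (x, y) \<in> f P)"

definition adds_voter :: "('v, 'c) profile \<Rightarrow> ('v, 'c) profile \<Rightarrow> 'v \<Rightarrow> bool" where
  "adds_voter P P' i \<longleftrightarrow> i \<notin> voters P \<and> voters P' = insert i (voters P) \<and>
     cands P' = cands P \<and> (\<forall>j\<in>voters P. ballot P' j = ballot P j)"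

definition positive_involvement_in_defeat :: "(('v, 'c) profile \<Rightarrow> ('c \<times> 'c) set) \<Rightarrow> bool" where
  "positive_involvement_in_defeat f \<longleftrightarrow>
     (\<forall>P P' i x y. is_profile P \<longrightarrow> is_profile P' \<longrightarrow> (x, y) \<notin> f P \<longrightarrow>
        adds_voter P P' i \<longrightarrow> (y, x) \<in> ballot P' i \<longrightarrow> (x, y) \<notin> f P')"

end

theory Submission
  imports Defs
begin

(* Let (x, y) be in sc P, let k = Margin(x, y) and let D be the set of candidates reachable from y
   along edges of margin at least k; the Split Cycle condition says exactly that x is not in D.
   Add k - 1 new voters who all cast the same ballot: the candidates outside D and different from x
   tied at the top, then y, then x, then D - {y} tied at the bottom. Afterwards x still beats y by
   one vote, while every edge leaving D has margin at most 0, so there is no majority path from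
   y to x and Coherent Defeat makes x defeat y. Every new voter ranks y above x, so Positive
   Involvement in Defeat keeps the defeat while they are removed one at a time. *)

lemma trancl_iff_chain:
  "(a, b) \<in> R\<^sup>+ \<longleftrightarrow> (\<exists>xs. 2 \<le> length xs \<and> hd xs = a \<and> last xs = b \<and>
     (\<forall>i. Suc i < length xs \<longrightarrow> (xs ! i, xs ! Suc i) \<in> R))"
proof
  assume "(a, b) \<in> R\<^sup>+"
  then obtain n f where "0 < n" "f 0 = a" "f n = b" "\<forall>i<n. (f i, f (Suc i)) \<in> R"
    by (auto simp: trancl_power relpow_fun_conv)
  then show "\<exists>xs. 2 \<le> length xs \<and> hd xs = a \<and> last xs = b \<and>
     (\<forall>i. Suc i < length xs \<longrightarrow> (xs ! i, xs ! Suc i) \<in> R)"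
    by (intro exI[of _ "map f [0..<Suc n]"]) (auto simp: hd_map last_map simp del: upt_Suc)
next
  assume "\<exists>xs. 2 \<le> length xs \<and> hd xs = a \<and> last xs = b \<and>
     (\<forall>i. Suc i < length xs \<longrightarrow> (xs ! i, xs ! Suc i) \<in> R)"
  then obtain xs where xs: "2 \<le> length xs" "hd xs = a" "last xs = b"
    "\<forall>i. Suc i < length xs \<longrightarrow> (xs ! i, xs ! Suc i) \<in> R" by blast
  then have "(xs ! 0, xs ! (length xs - 1)) \<in> R ^^ (length xs - 1)"
    unfolding relpow_fun_conv by (intro exI[of _ "(!) xs"]) auto
  moreover have "xs \<noteq> []"
    using xs(1) by auto
  then have "xs ! 0 = a" "xs ! (length xs - 1) = b"
    using xs(2,3) by (auto simp: hd_conv_nth last_conv_nth)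
  ultimately show "(a, b) \<in> R\<^sup>+"
    using xs(1) by (auto simp: trancl_power intro!: exI[of _ "length xs - 1"])
qed

definition margin_ge :: "('v, 'c) profile \<Rightarrow> int \<Rightarrow> 'c rel" where
  "margin_ge P k = {(a, b). k \<le> margin P a b}"

lemma margin_swap: "margin P y x = - margin P x y"
  unfolding margin_def by simp

lemma margin_eq_0_if_not_cands:
  assumes "is_profile P" "a \<notin> cands P \<or> b \<notin> cands P"
  shows "margin P a b = 0"
proof -
  have "\<forall>i\<in>voters P. (a, b) \<notin> ballot P i \<and> (b, a) \<notin> ballot P i"
    using assms unfolding is_profile_def strict_weak_order_def by blast
  then have "{i \<in> voters P. (a, b) \<in> ballot P i} = {}" "{i \<in> voters P. (b, a) \<in> ballot P i} = {}"
    by auto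
  then show ?thesis unfolding margin_def by (simp only: card.empty)
qed

lemma strength_ge_iff:
  assumes "2 \<le> length xs"
  shows "k \<le> strength P xs \<longleftrightarrow> (\<forall>i. Suc i < length xs \<longrightarrow> k \<le> margin P (xs ! i) (xs ! Suc i))"
proof -
  have "finite {i. Suc i < length xs}"
    by (rule finite_subset[of _ "{..<length xs}"]) auto
  moreover have "0 \<in> {i. Suc i < length xs}"
    using assms by simp
  ultimately show ?thesis
    unfolding strength_def Setcompr_eq_image by (subst Min_ge_iff) auto
qed

lemma trancl_margin_ge_iff:
  assumes "0 < k"
  shows "(a, b) \<in> (margin_ge P k)\<^sup>+ \<longleftrightarrow>
    (\<exists>xs. majority_path_from_to P xs a b \<and> k \<le> strength P xs)"
proof -
  have "majority_path P xs" if "2 \<le> length xs" "k \<le> strength P xs" for xs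
    using that assms by (auto simp: majority_path_def strength_ge_iff intro: order_less_le_trans)
  then show ?thesis
    unfolding trancl_iff_chain majority_path_from_to_def margin_ge_def
    by (auto simp: majority_path_def strength_ge_iff)
qed

lemma majority_path_iff_trancl:
  "(\<exists>xs. majority_path_from_to P xs a b) \<longleftrightarrow> (a, b) \<in> (margin_ge P 1)\<^sup>+"
proof -
  have "1 \<le> strength P xs" if "majority_path P xs" for xs
    using that by (auto simp: majority_path_def strength_ge_iff)
  then show ?thesis
    unfolding trancl_margin_ge_iff[OF zero_less_one] majority_path_from_to_def by blast
qed

lemma sc_not_trancl_margin_ge:
  "(x, y) \<in> sc P \<Longrightarrow> (y, x) \<notin> (margin_ge P (margin P x y))\<^sup>+"
  unfolding sc_def by (auto simp: trancl_margin_ge_iff)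

lemma strict_weak_order_rank:
  fixes r :: "'c \<Rightarrow> 'a::linorder"
  shows "strict_weak_order X {(a, b). a \<in> X \<and> b \<in> X \<and> r b < r a}"
  unfolding strict_weak_order_def by auto

definition add_voters :: "('v, 'c) profile \<Rightarrow> 'v set \<Rightarrow> ('c \<times> 'c) set \<Rightarrow> ('v, 'c) profile" where
  "add_voters P W B =
     P\<lparr>voters := voters P \<union> W, ballot := (\<lambda>i. if i \<in> W then B else ballot P i)\<rparr>"

lemma add_voters_empty [simp]: "add_voters P {} B = P"
  unfolding add_voters_def by simp

lemma is_profile_add_voters:
  assumes "is_profile P" "finite W" "strict_weak_order (cands P) B"
  shows "is_profile (add_voters P W B)"
  using assms unfolding is_profile_def add_voters_def by auto

lemma adds_voter_add_voters:
  assumes "i \<notin> voters P" "i \<notin> W"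
  shows "adds_voter (add_voters P W B) (add_voters P (insert i W) B) i"
  using assms unfolding adds_voter_def add_voters_def by auto

lemma margin_add_voters:
  assumes "is_profile P" "finite W" "W \<inter> voters P = {}"
  shows "margin (add_voters P W B) a b =
    margin P a b + int (card W) * (of_bool ((a, b) \<in> B) - of_bool ((b, a) \<in> B))"
proof -
  have "card {i \<in> voters (add_voters P W B). (a, b) \<in> ballot (add_voters P W B) i} =
    card {i \<in> voters P. (a, b) \<in> ballot P i} + of_bool ((a, b) \<in> B) * card W" for a b
  proof -
    have "{i \<in> voters (add_voters P W B). (a, b) \<in> ballot (add_voters P W B) i} =
      {i \<in> voters P. (a, b) \<in> ballot P i} \<union> (if (a, b) \<in> B then W else {})"
      using assms(3) unfolding add_voters_def by auto
    moreover have "finite (voters P)"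
      using assms(1) unfolding is_profile_def by simp
    moreover have "{i \<in> voters P. (a, b) \<in> ballot P i} \<inter> W = {}"
      using assms(3) by auto
    ultimately show ?thesis
      using assms(2) by (auto simp: card_Un_disjoint)
  qed
  then show ?thesis
    unfolding margin_def by (simp add: algebra_simps)
qed

lemma positive_involvement_in_defeat_add_voters:
  assumes "positive_involvement_in_defeat f" "is_profile P" "strict_weak_order (cands P) B"
    and "(y, x) \<in> B" "finite W" "W \<inter> voters P = {}" "(x, y) \<notin> f P"
  shows "(x, y) \<notin> f (add_voters P W B)"
  using assms(5,6)
proof (induction W rule: finite_induct)
  case empty
  show ?case using assms(7) by simp
next
  case (insert i W)
  then have "(x, y) \<notin> f (add_voters P W B)"
    by auto
  moreover have "adds_voter (add_voters P W B) (add_voters P (insert i W) B) i"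
    using insert by (intro adds_voter_add_voters) auto
  moreover have "ballot (add_voters P (insert i W) B) i = B"
    unfolding add_voters_def by simp
  moreover have "is_profile (add_voters P W B)" "is_profile (add_voters P (insert i W) B)"
    using assms(2,3) insert.hyps(1) by (auto intro: is_profile_add_voters)
  ultimately show ?case
    using assms(1,4) unfolding positive_involvement_in_defeat_def by blast
qed

lemma sc_isolating_ballot:
  fixes P :: "('v, 'c) profile"
  assumes prof: "is_profile P" and sc: "(x, y) \<in> sc P"
  obtains B where "strict_weak_order (cands P) B" "(y, x) \<in> B"
    and "\<And>W. finite W \<Longrightarrow> W \<inter> voters P = {} \<Longrightarrow> int (card W) = margin P x y - 1 \<Longrightarrow>
           0 < margin (add_voters P W B) x y \<and> (y, x) \<notin> (margin_ge (add_voters P W B) 1)\<^sup>+"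
proof -
  define k where "k = margin P x y"
  define D where "D = (margin_ge P k)\<^sup>* `` {y}"
  define rank :: "'c \<Rightarrow> nat" where
    "rank c = (if c \<in> D - {y} then 0 else if c = x then 1 else if c = y then 2 else 3)" for c
  define B where "B = {(a, b). a \<in> cands P \<and> b \<in> cands P \<and> rank b < rank a}"
  have xX: "x \<in> cands P" and yX: "y \<in> cands P" and k_pos: "0 < k"
    using sc unfolding sc_def k_def by auto
  have "x \<noteq> y"
    using k_pos unfolding k_def margin_def by auto
  then have x_notin_D: "x \<notin> D"
    using sc_not_trancl_margin_ge[OF sc] unfolding D_def k_def by (auto simp: rtrancl_eq_or_trancl)
  have D_closed: "b \<in> D" if "a \<in> D" "k \<le> margin P a b" for a b
    using that unfolding D_def margin_ge_def by (auto intro: rtrancl_into_rtrancl)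
  have B_swo: "strict_weak_order (cands P) B"
    unfolding B_def by (rule strict_weak_order_rank)
  have yx_B: "(y, x) \<in> B" and xy_B: "(x, y) \<notin> B"
    using xX yX x_notin_D \<open>x \<noteq> y\<close> unfolding B_def rank_def by auto
  show thesis
  proof (rule that[OF B_swo yx_B])
    fix W assume W: "finite W" "W \<inter> voters P = {}" "int (card W) = margin P x y - 1"
    define Q where "Q = add_voters P W B"
    have margin_Q: "margin Q a b = margin P a b + (k - 1) * (of_bool ((a, b) \<in> B) - of_bool ((b, a) \<in> B))"
      for a b
      unfolding Q_def k_def margin_add_voters[OF prof W(1,2)] W(3) ..
    have "margin_ge Q 1 `` D \<subseteq> D"
    proof (intro subsetI, elim ImageE)
      fix a b assume "(a, b) \<in> margin_ge Q 1" "a \<in> D"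
      show "b \<in> D"
      proof (rule ccontr)
        assume "b \<notin> D"
        consider "(a, b) = (y, x)" | "a \<notin> cands P \<or> b \<notin> cands P"
          | "(a, b) \<noteq> (y, x)" "a \<in> cands P" "b \<in> cands P"
          by blast
        then have "margin Q a b \<le> 0"
        proof cases
          case 1
          then show ?thesis
            using margin_Q[of y x] yx_B xy_B margin_swap[of P y x] k_def by auto
        next
          case 2
          then have "(a, b) \<notin> B" "(b, a) \<notin> B"
            unfolding B_def by auto
          then show ?thesis
            using margin_Q[of a b] margin_eq_0_if_not_cands[OF prof 2] by simp
        next
          case 3
          then have "(b, a) \<in> B" "(a, b) \<notin> B"
            using \<open>a \<in> D\<close> \<open>b \<notin> D\<close> unfolding B_def rank_def by auto
          moreover have "margin P a b < k"
            using D_closed \<open>a \<in> D\<close> \<open>b \<notin> D\<close> by force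
          ultimately show ?thesis
            using margin_Q[of a b] by simp
        qed
        then show False
          using \<open>(a, b) \<in> margin_ge Q 1\<close> unfolding margin_ge_def by simp
      qed
    qed
    then have "(y, x) \<notin> (margin_ge Q 1)\<^sup>*"
      using Image_closed_trancl x_notin_D unfolding D_def by blast
    moreover have "0 < margin Q x y"
      using margin_Q[of x y] yx_B xy_B k_def by simp
    ultimately show "0 < margin Q x y \<and> (y, x) \<notin> (margin_ge Q 1)\<^sup>+"
      by (auto dest: trancl_into_rtrancl)
  qed
qed

theorem theorem7p8:
  fixes f :: "('v, 'c) profile \<Rightarrow> ('c \<times> 'c) set"
  assumes "infinite (UNIV :: 'v set)"
    and "infinite (UNIV :: 'c set)"
    and "vccr f"
    and "downward_homogeneity f"
    and "coherent_defeat f"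
    and "positive_involvement_in_defeat f"
  shows "\<forall>P. is_profile P \<longrightarrow> sc P \<subseteq> f P"
proof (intro allI impI subsetI, clarify)
  fix P :: "('v, 'c) profile" and x y
  assume prof: "is_profile P" and sc: "(x, y) \<in> sc P"
  obtain B where B: "strict_weak_order (cands P) B" "(y, x) \<in> B"
    and isolating: "\<And>W. finite W \<Longrightarrow> W \<inter> voters P = {} \<Longrightarrow> int (card W) = margin P x y - 1 \<Longrightarrow>
      0 < margin (add_voters P W B) x y \<and> (y, x) \<notin> (margin_ge (add_voters P W B) 1)\<^sup>+"
    using sc_isolating_ballot[OF prof sc] by blast
  have "0 < margin P x y"
    using sc unfolding sc_def by simp
  have "infinite (- voters P)"
    using assms(1) prof unfolding is_profile_def by (simp add: Compl_eq_Diff_UNIV)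
  obtain W where "finite W" "card W = nat (margin P x y - 1)" "W \<subseteq> - voters P"
    using infinite_arbitrarily_large[OF \<open>infinite (- voters P)\<close>] by blast
  with \<open>0 < margin P x y\<close> have W: "finite W" "W \<inter> voters P = {}" "int (card W) = margin P x y - 1"
    by auto
  have "(x, y) \<in> f (add_voters P W B)"
    using assms(5) isolating[OF W] is_profile_add_voters[OF prof W(1) B(1)]
    unfolding coherent_defeat_def majority_path_iff_trancl by blast
  then show "(x, y) \<in> f P"
    using positive_involvement_in_defeat_add_voters[OF assms(6) prof B W(1,2)] by blast
qed

end
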